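(* Let $n\ge 2$. The maximum values of the normalized Graovac-Ghorbani index and of the Graovac-Ghorbani index over the set of all connected bipartite graphs $G$ on $n$ vertices are $$\mathrm{NGG}(G) = \sqrt{\lfloor n/2\rfloor \lceil n/2\rceil} \quad\text{and}\quad \mathrm{GG}(G) = \sqrt{(n-2)\lfloor n/2\rfloor \lceil n/2\rceil},$$ respectively, and each of these values is achieved if and only if $G$ is the complete bipartite graph $K_{\lfloor n/2\rfloor, \lceil n/2\rceil}$.
   Context: All graphs are finite, simple, undirected and connected. For an edge $uv$ of a graph $G$, let $n_u = |\{w \in V(G) : d(w,u) < d(w,v)\}|$ and $n_v = |\{w \in V(G) : d(w,v) < d(w,u)\}|$, where $d$ is the shortest-path distance. The Graovac-Ghorbani index is $\mathrm{GG}(G) = \sum_{uv \in E(G)} \sqrt{\frac{n_u + n_v - 2}{n_u n_v}}$ and the normalized Graovac-Ghorbani index is $\mathrm{NGG}(G) = \sum_{uv \in E(G)} \frac{1}{\sqrt{n_u n_v}}$. *)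

theory Defs
  imports Complex_Main
begin

definition simple_graph :: "'a set \<Rightarrow> ('a \<Rightarrow> 'a \<Rightarrow> bool) \<Rightarrow> bool" where
  "simple_graph V E \<longleftrightarrow> finite V \<and> (\<forall>x y. E x y \<longrightarrow> x \<in> V \<and> y \<in> V)
     \<and> (\<forall>x y. E x y \<longrightarrow> E y x) \<and> (\<forall>x. \<not> E x x)"

definition is_walk :: "'a set \<Rightarrow> ('a \<Rightarrow> 'a \<Rightarrow> bool) \<Rightarrow> 'a list \<Rightarrow> bool" where
  "is_walk V E xs \<longleftrightarrow> xs \<noteq> [] \<and> set xs \<subseteq> V \<and> (\<forall>i. Suc i < length xs \<longrightarrow> E (xs ! i) (xs ! Suc i))"

definition connected_graph :: "'a set \<Rightarrow> ('a \<Rightarrow> 'a \<Rightarrow> bool) \<Rightarrow> bool" where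
  "connected_graph V E \<longleftrightarrow> V \<noteq> {} \<and>
     (\<forall>u\<in>V. \<forall>v\<in>V. \<exists>xs. is_walk V E xs \<and> hd xs = u \<and> last xs = v)"

definition gdist :: "'a set \<Rightarrow> ('a \<Rightarrow> 'a \<Rightarrow> bool) \<Rightarrow> 'a \<Rightarrow> 'a \<Rightarrow> nat" where
  "gdist V E u v = (LEAST k. \<exists>xs. is_walk V E xs \<and> hd xs = u \<and> last xs = v \<and> length xs = Suc k)"

definition bipartite :: "'a set \<Rightarrow> ('a \<Rightarrow> 'a \<Rightarrow> bool) \<Rightarrow> bool" where
  "bipartite V E \<longleftrightarrow> (\<exists>A. \<forall>x y. E x y \<longrightarrow> (x \<in> A \<longleftrightarrow> y \<notin> A))"

definition is_complete_bipartite :: "'a set \<Rightarrow> ('a \<Rightarrow> 'a \<Rightarrow> bool) \<Rightarrow> nat \<Rightarrow> nat \<Rightarrow> bool" where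
  "is_complete_bipartite V E p q \<longleftrightarrow> (\<exists>A B. A \<inter> B = {} \<and> A \<union> B = V \<and> card A = p \<and> card B = q \<and>
     (\<forall>x y. E x y \<longleftrightarrow> (x \<in> A \<and> y \<in> B) \<or> (x \<in> B \<and> y \<in> A)))"

definition n_closer :: "'a set \<Rightarrow> ('a \<Rightarrow> 'a \<Rightarrow> bool) \<Rightarrow> 'a \<Rightarrow> 'a \<Rightarrow> nat" where
  "n_closer V E u v = card {w \<in> V. gdist V E w u < gdist V E w v}"

text \<open>Sums over edges are written as sums over ordered adjacent pairs divided by 2;
  the summands are symmetric in u and v.\<close>
definition GG :: "'a set \<Rightarrow> ('a \<Rightarrow> 'a \<Rightarrow> bool) \<Rightarrow> real" where
  "GG V E = (\<Sum>(u,v)\<in>{(u,v). u \<in> V \<and> v \<in> V \<and> E u v}.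
      sqrt ((real (n_closer V E u v) + real (n_closer V E v u) - 2)
            / (real (n_closer V E u v) * real (n_closer V E v u)))) / 2"

definition NGG :: "'a set \<Rightarrow> ('a \<Rightarrow> 'a \<Rightarrow> bool) \<Rightarrow> real" where
  "NGG V E = (\<Sum>(u,v)\<in>{(u,v). u \<in> V \<and> v \<in> V \<and> E u v}.
      1 / sqrt (real (n_closer V E u v) * real (n_closer V E v u))) / 2"

end

theory Submission
  imports Defs "HOL-Analysis.Convex"
begin

text \<open>For an edge uv of a connected bipartite graph, the distances from any vertex to u and to v
  have different parities, so n_u + n_v = n; hence GG = sqrt (n - 2) * NGG. Moreover u and all
  neighbours of u other than v are closer to u, so n_u \<ge> deg u, and therefore
  1 / (n_u n_v) = (1/n_u + 1/n_v) / n \<le> (1/deg u + 1/deg v) / n. Summing over the 2m ordered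
  edges gives a total of at most 2, and Cauchy-Schwarz yields NGG \<le> sqrt m. Finally
  m \<le> \<lfloor>n/2\<rfloor>\<lceil>n/2\<rceil>, with equality only for the balanced complete bipartite graph, on which every
  edge has n_u n_v = \<lfloor>n/2\<rfloor>\<lceil>n/2\<rceil>.\<close>

lemma balanced_split_gap:
  fixes k n :: nat
  assumes "k \<le> n"
  shows "int (n div 2 * (n - n div 2)) - int (k * (n - k))
    = (int k - int (n div 2)) * (int k - int (n - n div 2))"
  using assms by (simp add: of_nat_diff algebra_simps)

lemma mult_diff_le_balanced_split:
  fixes k n :: nat
  assumes "k \<le> n"
  shows "k * (n - k) \<le> n div 2 * (n - n div 2)"
    and "k * (n - k) = n div 2 * (n - n div 2) \<longleftrightarrow> k = n div 2 \<or> k = n - n div 2"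
proof -
  \<comment> \<open>No integer lies strictly between n div 2 and n - n div 2, so the gap is never negative.\<close>
  have "k \<le> n div 2 \<or> n - n div 2 \<le> k" and "n div 2 \<le> n - n div 2"
    by linarith+
  then have "(int k - int (n div 2)) * (int k - int (n - n div 2)) \<ge> 0"
    by (auto simp: zero_le_mult_iff)
  then show "k * (n - k) \<le> n div 2 * (n - n div 2)"
    using balanced_split_gap[OF assms] by linarith
  have "k * (n - k) = n div 2 * (n - n div 2)
    \<longleftrightarrow> int (n div 2 * (n - n div 2)) - int (k * (n - k)) = 0"
    by linarith
  also have "\<dots> \<longleftrightarrow> k = n div 2 \<or> k = n - n div 2"
    unfolding balanced_split_gap[OF assms] by auto
  finally show "k * (n - k) = n div 2 * (n - n div 2) \<longleftrightarrow> k = n div 2 \<or> k = n - n div 2" .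
qed

lemma is_walk_singleton [simp]: "is_walk V E [x] \<longleftrightarrow> x \<in> V"
  by (simp add: is_walk_def)

lemma is_walk_Cons_Cons [simp]:
  "is_walk V E (x # y # xs) \<longleftrightarrow> x \<in> V \<and> E x y \<and> is_walk V E (y # xs)"
proof -
  have "(\<forall>i. Suc i < length (x # y # xs) \<longrightarrow> P i)
    \<longleftrightarrow> P 0 \<and> (\<forall>i. Suc i < length (y # xs) \<longrightarrow> P (Suc i))" for P
    using less_Suc_eq_0_disj by auto
  then show ?thesis
    by (auto simp: is_walk_def)
qed

definition arcs :: "'a set \<Rightarrow> ('a \<Rightarrow> 'a \<Rightarrow> bool) \<Rightarrow> ('a \<times> 'a) set" where
  "arcs V E = {(u, v). u \<in> V \<and> v \<in> V \<and> E u v}"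

definition degree :: "('a \<Rightarrow> 'a \<Rightarrow> bool) \<Rightarrow> 'a \<Rightarrow> nat" where
  "degree E u = card {v. E u v}"

locale connected_simple_graph =
  fixes V :: "'a set" and E :: "'a \<Rightarrow> 'a \<Rightarrow> bool"
  assumes simple: "simple_graph V E" and connected: "connected_graph V E"
begin

lemma finite_V: "finite V"
  using simple by (simp add: simple_graph_def)

lemma card_V_pos: "0 < card V"
  using connected finite_V by (simp add: connected_graph_def card_gt_0_iff)

lemma adj_in_V: "E x y \<Longrightarrow> x \<in> V" "E x y \<Longrightarrow> y \<in> V"
  using simple by (simp_all add: simple_graph_def)

lemma adj_sym: "E x y \<Longrightarrow> E y x"
  using simple by (simp add: simple_graph_def)

lemma adj_irrefl: "\<not> E x x"
  using simple by (simp add: simple_graph_def)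

lemma mem_arcs_iff [simp]: "(u, v) \<in> arcs V E \<longleftrightarrow> E u v"
  using adj_in_V by (auto simp: arcs_def)

lemma arcs_eq_Sigma: "arcs V E = Sigma V (\<lambda>u. {v. E u v})"
  using adj_in_V by (auto simp: arcs_def)

lemma finite_neighbours: "finite {v. E u v}"
  by (rule finite_subset[OF _ finite_V]) (auto intro: adj_in_V)

lemma finite_arcs: "finite (arcs V E)"
  using finite_V finite_neighbours by (simp add: arcs_eq_Sigma)

lemma degree_pos: "E u v \<Longrightarrow> 0 < degree E u"
  using finite_neighbours by (auto simp: degree_def card_gt_0_iff)

lemma shortest_walk_exists:
  assumes "u \<in> V" "v \<in> V"
  obtains xs where "is_walk V E xs" "hd xs = u" "last xs = v" "length xs = Suc (gdist V E u v)"
proof -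
  obtain xs where "is_walk V E xs" "hd xs = u" "last xs = v"
    using connected assms by (auto simp: connected_graph_def)
  moreover have "length xs = Suc (length xs - 1)"
    using \<open>is_walk V E xs\<close> by (cases xs) (auto simp: is_walk_def)
  ultimately have "\<exists>k xs. is_walk V E xs \<and> hd xs = u \<and> last xs = v \<and> length xs = Suc k"
    by blast
  then have "\<exists>xs. is_walk V E xs \<and> hd xs = u \<and> last xs = v \<and> length xs = Suc (gdist V E u v)"
    unfolding gdist_def by (rule LeastI_ex)
  with that show ?thesis
    by blast
qed

lemma gdist_le_walk:
  assumes "is_walk V E xs" "hd xs = u" "last xs = v"
  shows "gdist V E u v \<le> length xs - 1"
proof -
  have "length xs = Suc (length xs - 1)"
    using assms(1) by (cases xs) (auto simp: is_walk_def)
  then show ?thesis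
    unfolding gdist_def using assms by (blast intro: Least_le)
qed

lemma gdist_eq_0_iff:
  assumes "u \<in> V" "v \<in> V"
  shows "gdist V E u v = 0 \<longleftrightarrow> u = v"
proof
  assume "gdist V E u v = 0"
  then obtain xs where "hd xs = u" "last xs = v" "length xs = 1"
    using shortest_walk_exists[OF assms] by auto
  then show "u = v"
    by (cases xs) auto
next
  assume "u = v"
  then show "gdist V E u v = 0"
    using gdist_le_walk[of "[u]" u u] assms by simp
qed

lemma gdist_adj_le_1: "E u v \<Longrightarrow> gdist V E u v \<le> 1"
  using gdist_le_walk[of "[u, v]" u v] adj_in_V by simp

lemma two_le_card_arcs:
  assumes "2 \<le> card V"
  shows "2 \<le> card (arcs V E)"
proof -
  obtain x y where "x \<in> V" "y \<in> V" "x \<noteq> y"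
    using assms
    by (metis One_nat_def card_le_Suc0_iff_eq card.infinite not_less_eq_eq numeral_2_eq_2 zero_le_one)
  then obtain xs where xs: "is_walk V E xs" "hd xs = x" "last xs = y"
    using connected by (auto simp: connected_graph_def)
  then obtain a b zs where "xs = a # b # zs"
    using \<open>x \<noteq> y\<close> by (cases xs rule: remdups_adj.cases) (auto simp: is_walk_def)
  then have "E a b"
    using xs(1) by simp
  then have sub: "{(a, b), (b, a)} \<subseteq> arcs V E" and "a \<noteq> b"
    using adj_sym adj_irrefl by auto
  then have "card {(a, b), (b, a)} = 2"
    by simp
  with card_mono[OF finite_arcs sub] show ?thesis
    by simp
qed

lemma sum_arcs_inverse_degree_le: "(\<Sum>(u, v)\<in>arcs V E. 1 / real (degree E u)) \<le> real (card V)"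
proof -
  have "(\<Sum>(u, v)\<in>arcs V E. 1 / real (degree E u)) = (\<Sum>u\<in>V. real (degree E u) * (1 / real (degree E u)))"
    unfolding arcs_eq_Sigma using finite_V finite_neighbours
    by (simp add: sum.Sigma[symmetric] degree_def)
  also have "\<dots> \<le> (\<Sum>u\<in>V. 1)"
    by (rule sum_mono) simp
  finally show ?thesis by simp
qed

lemma sum_arcs_swap: "(\<Sum>(u, v)\<in>arcs V E. g v u) = (\<Sum>(u, v)\<in>arcs V E. g u v)"
  by (rule sum.reindex_bij_witness[where i = prod.swap and j = prod.swap]) (auto simp: adj_sym)

end

locale connected_bipartite_graph = connected_simple_graph +
  fixes A :: "'a set"
  assumes adj_crosses: "E x y \<Longrightarrow> x \<in> A \<longleftrightarrow> y \<notin> A"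
begin

lemma walk_ends_same_side_iff:
  "is_walk V E xs \<Longrightarrow> (hd xs \<in> A \<longleftrightarrow> last xs \<in> A) \<longleftrightarrow> even (length xs - 1)"
proof (induction xs rule: induct_list012)
  case (3 x y xs)
  then show ?case
    using adj_crosses[of x y] by auto
qed (auto simp: is_walk_def)

lemma even_gdist_iff:
  assumes "u \<in> V" "v \<in> V"
  shows "even (gdist V E u v) \<longleftrightarrow> (u \<in> A \<longleftrightarrow> v \<in> A)"
proof -
  obtain xs where "is_walk V E xs" "hd xs = u" "last xs = v" "length xs = Suc (gdist V E u v)"
    using shortest_walk_exists[OF assms] .
  with walk_ends_same_side_iff[of xs] show ?thesis
    by simp
qed

lemma gdist_ne_adj:
  assumes "E u v" "w \<in> V"
  shows "gdist V E w u \<noteq> gdist V E w v"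
  using even_gdist_iff[OF assms(2) adj_in_V(1)[OF assms(1)]]
    even_gdist_iff[OF assms(2) adj_in_V(2)[OF assms(1)]] adj_crosses[OF assms(1)]
  by auto

lemma n_closer_add:
  assumes "E u v"
  shows "n_closer V E u v + n_closer V E v u = card V"
proof -
  define X where "X = {w \<in> V. gdist V E w u < gdist V E w v}"
  define Y where "Y = {w \<in> V. gdist V E w v < gdist V E w u}"
  have "V = X \<union> Y"
    using gdist_ne_adj[OF assms] by (auto simp: X_def Y_def linorder_neq_iff)
  moreover have "card (X \<union> Y) = card X + card Y"
    by (rule card_Un_disjoint) (auto simp: X_def Y_def intro: finite_subset[OF _ finite_V])
  ultimately show ?thesis
    by (simp add: n_closer_def X_def Y_def)
qed

lemma degree_le_n_closer:
  assumes "E u v"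
  shows "degree E u \<le> n_closer V E u v"
proof -
  \<comment> \<open>A neighbour w \<noteq> v of u has d(w,u) = 1, while d(w,v) is even and nonzero.\<close>
  have "gdist V E w u < gdist V E w v" if "w \<in> insert u ({w. E u w} - {v})" for w
  proof (cases "w = u")
    case True
    then show ?thesis
      using assms adj_in_V adj_irrefl gdist_eq_0_iff[of u u] gdist_eq_0_iff[of u v] by auto
  next
    case False
    then have "E w u" "w \<noteq> v"
      using that adj_sym by auto
    have w: "w \<in> V" and v: "v \<in> V"
      using adj_in_V \<open>E w u\<close> assms by auto
    have "gdist V E w u \<le> 1" and "gdist V E w v \<noteq> 0"
      using gdist_adj_le_1[OF \<open>E w u\<close>] gdist_eq_0_iff[OF w v] \<open>w \<noteq> v\<close> by auto
    moreover have "even (gdist V E w v)"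
      using even_gdist_iff[OF w v] adj_crosses[OF \<open>E w u\<close>] adj_crosses[OF assms] by auto
    then have "gdist V E w v \<noteq> 1"
      by auto
    ultimately show ?thesis
      by linarith
  qed
  then have "insert u ({w. E u w} - {v}) \<subseteq> {w \<in> V. gdist V E w u < gdist V E w v}"
    using adj_in_V assms by blast
  then have "card (insert u ({w. E u w} - {v})) \<le> n_closer V E u v"
    unfolding n_closer_def using finite_V by (auto intro: card_mono)
  moreover have "card (insert u ({w. E u w} - {v})) = degree E u"
    using assms adj_irrefl finite_neighbours degree_pos[OF assms]
    by (simp add: degree_def card.insert_remove)
  ultimately show ?thesis
    by simp
qed

lemma NGG_eq_sum_arcs:
  "NGG V E = (\<Sum>(u, v)\<in>arcs V E. 1 / sqrt (real (n_closer V E u v) * real (n_closer V E v u))) / 2"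
  by (simp add: NGG_def arcs_def)

lemma GG_eq_sqrt_mult_NGG: "GG V E = sqrt (real (card V) - 2) * NGG V E"
proof -
  have summand: "sqrt ((real (n_closer V E u v) + real (n_closer V E v u) - 2)
            / (real (n_closer V E u v) * real (n_closer V E v u)))
      = sqrt (real (card V) - 2) * (1 / sqrt (real (n_closer V E u v) * real (n_closer V E v u)))"
    if "E u v" for u v
    using n_closer_add[OF that] by (simp add: real_sqrt_divide flip: of_nat_add)
  have "GG V E = (\<Sum>(u, v)\<in>arcs V E. sqrt (real (card V) - 2) *
      (1 / sqrt (real (n_closer V E u v) * real (n_closer V E v u)))) / 2"
    unfolding GG_def arcs_def[symmetric]
    by (rule arg_cong[where f = "\<lambda>s. s / 2"], rule sum.cong) (auto simp: summand)
  then show ?thesis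
    by (simp add: NGG_eq_sum_arcs sum_distrib_left case_prod_unfold)
qed

lemma inverse_mult_n_closer_le:
  assumes "E u v"
  shows "1 / (real (n_closer V E u v) * real (n_closer V E v u))
    \<le> (1 / real (degree E u) + 1 / real (degree E v)) / real (card V)"
proof -
  define a b where "a = real (n_closer V E u v)" and "b = real (n_closer V E v u)"
  have deg: "real (degree E u) \<le> a" "real (degree E v) \<le> b" "0 < degree E u" "0 < degree E v"
    using degree_le_n_closer degree_pos adj_sym[OF assms] assms by (auto simp: a_def b_def)
  have sum: "a + b = real (card V)"
    using n_closer_add[OF assms] by (simp add: a_def b_def flip: of_nat_add)
  have "0 < a" "0 < b"
    using deg by (auto intro: less_le_trans[rotated])
  then have "1 / (a * b) = (1 / a + 1 / b) / (a + b)"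
    by (simp add: field_simps) (metis add_pos_pos mult_pos_pos order_less_irrefl)
  also have "\<dots> \<le> (1 / real (degree E u) + 1 / real (degree E v)) / (a + b)"
    using deg by (intro divide_right_mono add_mono) (auto simp: frac_le)
  finally show ?thesis
    unfolding sum[symmetric] a_def b_def .
qed

lemma NGG_le_sqrt_card_arcs: "NGG V E \<le> sqrt (real (card (arcs V E)) / 2)"
proof -
  define f where "f = (\<lambda>(u, v). 1 / sqrt (real (n_closer V E u v) * real (n_closer V E v u)))"
  have "(\<Sum>x\<in>arcs V E. (f x)\<^sup>2)
      \<le> (\<Sum>(u, v)\<in>arcs V E. (1 / real (degree E u) + 1 / real (degree E v)) / real (card V))"
    by (rule sum_mono) (auto simp: f_def power_divide inverse_mult_n_closer_le)
  also have "\<dots> = 2 * (\<Sum>(u, v)\<in>arcs V E. 1 / real (degree E u)) / real (card V)"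
    using sum_arcs_swap[of "\<lambda>v u. 1 / real (degree E u)"]
    by (simp add: sum_divide_distrib[symmetric] sum.distrib case_prod_unfold)
  also have "\<dots> \<le> 2"
    using sum_arcs_inverse_degree_le card_V_pos by (simp add: divide_simps)
  finally have sum_sq: "(\<Sum>x\<in>arcs V E. (f x)\<^sup>2) \<le> 2" .
  have "(sum f (arcs V E))\<^sup>2 \<le> (\<Sum>x\<in>arcs V E. (f x)\<^sup>2) * real (card (arcs V E))"
    by (rule sum_squared_le_sum_of_squares)
  also have "\<dots> \<le> 2 * real (card (arcs V E))"
    using sum_sq by (intro mult_right_mono) auto
  finally have "(NGG V E)\<^sup>2 \<le> real (card (arcs V E)) / 2"
    by (simp add: NGG_eq_sum_arcs f_def power_divide)
  then show ?thesis
    by (rule real_le_rsqrt)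
qed

lemma arcs_subset_across: "arcs V E \<subseteq> (V \<inter> A) \<times> (V - A) \<union> (V - A) \<times> (V \<inter> A)"
  using adj_crosses adj_in_V by auto

lemma card_across:
  "card ((V \<inter> A) \<times> (V - A) \<union> (V - A) \<times> (V \<inter> A)) = 2 * (card (V \<inter> A) * (card V - card (V \<inter> A)))"
proof -
  have "card (V - A) = card V - card (V \<inter> A)"
    by (metis Diff_Int2 card_Diff_subset_Int finite_Int finite_V inf.idem)
  then show ?thesis
    using finite_V by (subst card_Un_disjoint) (auto simp: card_cartesian_product)
qed

lemma card_arcs_le_balanced: "card (arcs V E) \<le> 2 * (card V div 2 * (card V - card V div 2))"
proof -
  have "card (arcs V E) \<le> 2 * (card (V \<inter> A) * (card V - card (V \<inter> A)))"
    using card_mono[OF _ arcs_subset_across] finite_V card_across by auto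
  also have "\<dots> \<le> 2 * (card V div 2 * (card V - card V div 2))"
    using mult_diff_le_balanced_split(1)[of "card (V \<inter> A)" "card V"] finite_V
    by (simp add: card_mono)
  finally show ?thesis .
qed

lemma complete_bipartite_if_card_arcs_ge:
  assumes "2 * (card V div 2 * (card V - card V div 2)) \<le> card (arcs V E)"
  shows "is_complete_bipartite V E (card V div 2) (card V - card V div 2)"
proof -
  define X Y where "X = V \<inter> A" and "Y = V - A"
  have fin: "finite (X \<times> Y \<union> Y \<times> X)" and "card X \<le> card V"
    using finite_V by (auto simp: X_def Y_def card_mono)
  have "card (arcs V E) \<le> 2 * (card X * (card V - card X))"
    using card_mono[OF fin arcs_subset_across[folded X_def Y_def]] card_across by (simp add: X_def Y_def)
  then have split: "card X * (card V - card X) = card V div 2 * (card V - card V div 2)"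
    and "card (arcs V E) = card (X \<times> Y \<union> Y \<times> X)"
    using assms mult_diff_le_balanced_split(1)[OF \<open>card X \<le> card V\<close>] card_across
    by (auto simp: X_def Y_def)
  then have "arcs V E = X \<times> Y \<union> Y \<times> X"
    using card_subset_eq[OF fin arcs_subset_across[folded X_def Y_def]] by simp
  then have adj: "E x y \<longleftrightarrow> (x \<in> X \<and> y \<in> Y) \<or> (x \<in> Y \<and> y \<in> X)" for x y
    using mem_arcs_iff[of x y] by blast
  have XY: "X \<inter> Y = {}" "X \<union> Y = V" "card Y = card V - card X"
    using finite_V by (auto simp: X_def Y_def card_Diff_subset_Int Diff_Int2 simp flip: Int_Diff)
  consider "card X = card V div 2" | "card X = card V - card V div 2"
    using split mult_diff_le_balanced_split(2)[OF \<open>card X \<le> card V\<close>] by blast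
  then show ?thesis
  proof cases
    case 1
    then show ?thesis unfolding is_complete_bipartite_def
      using XY adj by (intro exI[of _ X] exI[of _ Y]) auto
  next
    case 2
    then show ?thesis unfolding is_complete_bipartite_def
      using XY adj \<open>card X \<le> card V\<close> by (intro exI[of _ Y] exI[of _ X]) auto
  qed
qed

lemma n_closer_eq_degree:
  assumes "E u v" "degree E u + degree E v = card V"
  shows "n_closer V E u v = degree E u"
  using degree_le_n_closer[OF assms(1)] degree_le_n_closer[OF adj_sym[OF assms(1)]]
    n_closer_add[OF assms(1)] assms(2)
  by linarith

lemma NGG_complete_bipartite:
  assumes "is_complete_bipartite V E a b"
  shows "NGG V E = sqrt (real a * real b)"
proof -
  obtain X Y where XY: "X \<inter> Y = {}" "X \<union> Y = V" "card X = a" "card Y = b"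
    and adj: "\<And>x y. E x y \<longleftrightarrow> (x \<in> X \<and> y \<in> Y) \<or> (x \<in> Y \<and> y \<in> X)"
    using assms unfolding is_complete_bipartite_def by blast
  have fin: "finite X" "finite Y"
    using finite_V XY(2) by (auto intro: finite_subset)
  have "card V = a + b"
    using XY fin by (metis card_Un_disjoint)
  have degree_X: "degree E u = b" if "u \<in> X" for u
  proof -
    have "{v. E u v} = Y" using that XY(1) adj by auto
    then show ?thesis using XY(4) by (simp add: degree_def)
  qed
  have degree_Y: "degree E u = a" if "u \<in> Y" for u
  proof -
    have "{v. E u v} = X" using that XY(1) adj by auto
    then show ?thesis using XY(3) by (simp add: degree_def)
  qed
  have summand: "1 / sqrt (real (n_closer V E u v) * real (n_closer V E v u)) = 1 / sqrt (real a * real b)"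
    if "(u, v) \<in> arcs V E" for u v
  proof -
    have "E u v" "E v u" using that adj_sym by auto
    then have "degree E u + degree E v = card V" "degree E v + degree E u = card V"
      using adj degree_X degree_Y \<open>card V = a + b\<close> XY(1) by auto
    then show ?thesis
      using n_closer_eq_degree \<open>E u v\<close> \<open>E v u\<close> adj degree_X degree_Y XY(1)
      by (auto simp: mult.commute)
  qed
  have arcs_eq: "arcs V E = X \<times> Y \<union> Y \<times> X"
    using adj by auto
  have "card (arcs V E) = 2 * (a * b)"
    unfolding arcs_eq using fin XY by (subst card_Un_disjoint) (auto simp: card_cartesian_product)
  then have "NGG V E = real (a * b) / sqrt (real a * real b)"
    by (simp add: NGG_eq_sum_arcs summand case_prod_unfold)
  then show ?thesis
    by (simp add: real_div_sqrt)
qed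

lemma NGG_le_balanced: "NGG V E \<le> sqrt (real (card V div 2) * real (card V - card V div 2))"
proof -
  have "real (card (arcs V E)) \<le> real (2 * (card V div 2 * (card V - card V div 2)))"
    using card_arcs_le_balanced by (simp only: of_nat_le_iff)
  then have "real (card (arcs V E)) / 2 \<le> real (card V div 2) * real (card V - card V div 2)"
    by simp
  then show ?thesis
    using NGG_le_sqrt_card_arcs real_sqrt_le_mono order_trans by blast
qed

lemma NGG_eq_balanced_iff:
  "NGG V E = sqrt (real (card V div 2) * real (card V - card V div 2))
    \<longleftrightarrow> is_complete_bipartite V E (card V div 2) (card V - card V div 2)"
proof
  assume "NGG V E = sqrt (real (card V div 2) * real (card V - card V div 2))"
  then have "sqrt (real (card V div 2) * real (card V - card V div 2)) \<le> sqrt (real (card (arcs V E)) / 2)"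
    using NGG_le_sqrt_card_arcs by simp
  then have "real (2 * (card V div 2 * (card V - card V div 2))) \<le> real (card (arcs V E))"
    by simp
  then have "2 * (card V div 2 * (card V - card V div 2)) \<le> card (arcs V E)"
    by (simp only: of_nat_le_iff)
  then show "is_complete_bipartite V E (card V div 2) (card V - card V div 2)"
    by (rule complete_bipartite_if_card_arcs_ge)
qed (rule NGG_complete_bipartite)

lemma GG_le_balanced:
  assumes "2 \<le> card V"
  shows "GG V E \<le> sqrt ((real (card V) - 2) * real (card V div 2) * real (card V - card V div 2))"
  using NGG_le_balanced assms
  by (simp add: GG_eq_sqrt_mult_NGG real_sqrt_mult mult.assoc mult_left_mono)

lemma GG_eq_balanced_iff:
  assumes "2 \<le> card V"
  shows "GG V E = sqrt ((real (card V) - 2) * real (card V div 2) * real (card V - card V div 2))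
    \<longleftrightarrow> is_complete_bipartite V E (card V div 2) (card V - card V div 2)"
proof (cases "card V = 2")
  case True
  \<comment> \<open>Here the bound is 0 = GG, and a connected graph on two vertices is always K_{1,1}.\<close>
  then have "GG V E = 0" and "2 * (card V div 2 * (card V - card V div 2)) \<le> card (arcs V E)"
    using two_le_card_arcs by (auto simp: GG_eq_sqrt_mult_NGG)
  then show ?thesis
    using complete_bipartite_if_card_arcs_ge True by simp
next
  case False
  then have "sqrt (real (card V) - 2) > 0"
    using assms by simp
  then show ?thesis
    using NGG_eq_balanced_iff by (simp add: GG_eq_sqrt_mult_NGG real_sqrt_mult mult.assoc)
qed

end

lemma bipartite_NGG_GG_extremal:
  assumes "simple_graph V E" "connected_graph V E" "bipartite V E" "card V = n" "2 \<le> n"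
  shows "NGG V E \<le> sqrt (real (n div 2) * real (n - n div 2)) \<and>
    GG V E \<le> sqrt ((real n - 2) * real (n div 2) * real (n - n div 2)) \<and>
    (NGG V E = sqrt (real (n div 2) * real (n - n div 2)) \<longleftrightarrow>
      is_complete_bipartite V E (n div 2) (n - n div 2)) \<and>
    (GG V E = sqrt ((real n - 2) * real (n div 2) * real (n - n div 2)) \<longleftrightarrow>
      is_complete_bipartite V E (n div 2) (n - n div 2))"
proof -
  obtain A where "\<And>x y. E x y \<Longrightarrow> x \<in> A \<longleftrightarrow> y \<notin> A"
    using assms(3) by (auto simp: bipartite_def)
  then interpret connected_bipartite_graph V E A
    using assms(1,2) by unfold_locales
  show ?thesis
    using NGG_le_balanced NGG_eq_balanced_iff GG_le_balanced GG_eq_balanced_iff assms(4,5) by auto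
qed

lemma connected_complete_bipartite:
  assumes "a \<in> A" "b \<in> B" "A \<inter> B = {}"
  shows "connected_graph (A \<union> B) (\<lambda>x y. (x \<in> A \<and> y \<in> B) \<or> (x \<in> B \<and> y \<in> A))"
  unfolding connected_graph_def
proof (intro conjI ballI)
  fix u v
  assume "u \<in> A \<union> B" "v \<in> A \<union> B"
  then consider "u \<in> A" "v \<in> B" | "u \<in> B" "v \<in> A" | "u \<in> A" "v \<in> A" | "u \<in> B" "v \<in> B"
    by blast
  then show "\<exists>xs. is_walk (A \<union> B) (\<lambda>x y. (x \<in> A \<and> y \<in> B) \<or> (x \<in> B \<and> y \<in> A)) xs
      \<and> hd xs = u \<and> last xs = v"
  proof cases
    case 1 then show ?thesis by (intro exI[of _ "[u, v]"]) auto
  next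
    case 2 then show ?thesis by (intro exI[of _ "[u, v]"]) auto
  next
    case 3 then show ?thesis using assms by (intro exI[of _ "[u, b, v]"]) auto
  next
    case 4 then show ?thesis using assms by (intro exI[of _ "[u, a, v]"]) auto
  qed
qed (use assms in auto)

lemma complete_bipartite_graph_exists:
  assumes "2 \<le> n"
  shows "\<exists>(V :: nat set) E. simple_graph V E \<and> connected_graph V E \<and> bipartite V E \<and> card V = n
    \<and> is_complete_bipartite V E (n div 2) (n - n div 2)"
proof -
  define A B where "A = {..<n div 2}" and "B = {n div 2..<n}"
  define E where "E = (\<lambda>x y. (x \<in> A \<and> y \<in> B) \<or> (x \<in> B \<and> y \<in> A))"
  have V: "A \<union> B = {..<n}" and disj: "A \<inter> B = {}"
    by (auto simp: A_def B_def)
  have "simple_graph (A \<union> B) E"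
    using disj by (auto simp: simple_graph_def E_def A_def B_def)
  moreover have "connected_graph (A \<union> B) E"
    unfolding E_def using assms disj
    by (intro connected_complete_bipartite[of 0 _ "n div 2"]) (auto simp: A_def B_def)
  moreover have "bipartite (A \<union> B) E"
    using disj by (auto simp: bipartite_def E_def intro!: exI[of _ A])
  moreover have "is_complete_bipartite (A \<union> B) E (n div 2) (n - n div 2)"
    unfolding is_complete_bipartite_def using disj
    by (intro exI[of _ A] exI[of _ B]) (auto simp: E_def A_def B_def)
  ultimately show ?thesis
    using V by (metis card_lessThan)
qed

theorem corollary6:
  fixes n :: nat
  assumes "n \<ge> 2"
  shows "(\<forall>(V :: 'a set) E. simple_graph V E \<and> connected_graph V E \<and> bipartite V E \<and> card V = n \<longrightarrow>
            NGG V E \<le> sqrt (real (n div 2) * real (n - n div 2)) \<and>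
            GG V E \<le> sqrt ((real n - 2) * real (n div 2) * real (n - n div 2)) \<and>
            (NGG V E = sqrt (real (n div 2) * real (n - n div 2)) \<longleftrightarrow>
               is_complete_bipartite V E (n div 2) (n - n div 2)) \<and>
            (GG V E = sqrt ((real n - 2) * real (n div 2) * real (n - n div 2)) \<longleftrightarrow>
               is_complete_bipartite V E (n div 2) (n - n div 2)))
       \<and> (\<exists>(V :: nat set) E. simple_graph V E \<and> connected_graph V E \<and> bipartite V E \<and> card V = n \<and>
            NGG V E = sqrt (real (n div 2) * real (n - n div 2)) \<and>
            GG V E = sqrt ((real n - 2) * real (n div 2) * real (n - n div 2)))"
proof -
  obtain V :: "nat set" and E where
    G: "simple_graph V E" "connected_graph V E" "bipartite V E" "card V = n"
    and complete: "is_complete_bipartite V E (n div 2) (n - n div 2)"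
    using complete_bipartite_graph_exists[OF assms] by blast
  show ?thesis
    using bipartite_NGG_GG_extremal[OF _ _ _ _ assms] bipartite_NGG_GG_extremal[OF G assms] G complete
    by blast
qed

end
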